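(* For every integer $n\geq 2$, $$\frac{3}{2}\,WS(n-1) + 1 \leq WS^+(n) \leq WS(n).$$
   Context: A set $A \subseteq \mathbb{N}$ is sum-free if for all $(a,b)\in A^2$ (allowing $a=b$), $a+b \notin A$; it is weakly sum-free if for all $(a,b)\in A^2$ with $a\neq b$, $a+b\notin A$. $WS(n)$ is the largest $p$ such that $\{1,\dots,p\}$ can be partitioned into $n$ weakly sum-free subsets. For positive integers $a>b$, let $\pi(x) = (x \bmod a) + a\cdot \mathbb{1}_{\{0,\dots,b\}}(x \bmod a)$. For positive integers $a,n,b$ with $a>b$, a partition $(A_1,\dots,A_n)$ of $\{1,\dots,a+b\}$ is a $b$-WS-template with width $a$ and $n$ colors if: (i) every $A_i$ is weakly sum-free; (ii) every $A_i\setminus\{1,\dots,b\}$ is sum-free; (iii) for all $(x,y)\in A_n^2$, $x+y>b+2a$ implies $x+y-2a\notin A_n$; (iv) for all $i\in\{1,\dots,n-1\}$ and $(x,y)\in A_i^2$, $x+y>a+b$ implies $\pi(x+y)\notin A_i$. $WS^+_b(n)$ is the largest $a$ such that a $b$-WS-template with width $a$ and $n$ colors exists ($0$ if none), and $WS^+(n)=\max_{b\in\mathbb{N}^*} WS^+_b(n)$. *)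

theory Defs
  imports Complex_Main
begin

definition sum_free :: "nat set \<Rightarrow> bool" where
  "sum_free A \<longleftrightarrow> (\<forall>a\<in>A. \<forall>b\<in>A. a + b \<notin> A)"

definition weakly_sum_free :: "nat set \<Rightarrow> bool" where
  "weakly_sum_free A \<longleftrightarrow> (\<forall>a\<in>A. \<forall>b\<in>A. a \<noteq> b \<longrightarrow> a + b \<notin> A)"

definition is_partition :: "(nat \<Rightarrow> nat set) \<Rightarrow> nat \<Rightarrow> nat set \<Rightarrow> bool" where
  "is_partition A n S \<longleftrightarrow>
     (\<Union>i\<in>{1..n}. A i) = S \<and>
     (\<forall>i\<in>{1..n}. \<forall>j\<in>{1..n}. i \<noteq> j \<longrightarrow> A i \<inter> A j = {})"

definition WS :: "nat \<Rightarrow> nat" where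
  "WS n = (GREATEST p. \<exists>A. is_partition A n {1..p} \<and> (\<forall>i\<in>{1..n}. weakly_sum_free (A i)))"

definition pi_map :: "nat \<Rightarrow> nat \<Rightarrow> nat \<Rightarrow> nat" where
  "pi_map a b x = x mod a + (if x mod a \<in> {0..b} then a else 0)"

definition WS_template :: "nat \<Rightarrow> nat \<Rightarrow> nat \<Rightarrow> (nat \<Rightarrow> nat set) \<Rightarrow> bool" where
  "WS_template b a n A \<longleftrightarrow>
     0 < b \<and> b < a \<and> 0 < n \<and>
     is_partition A n {1..a + b} \<and>
     (\<forall>i\<in>{1..n}. weakly_sum_free (A i)) \<and>
     (\<forall>i\<in>{1..n}. sum_free (A i - {1..b})) \<and>
     (\<forall>x\<in>A n. \<forall>y\<in>A n. x + y > b + 2 * a \<longrightarrow> x + y - 2 * a \<notin> A n) \<and>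
     (\<forall>i\<in>{1..n - 1}. \<forall>x\<in>A i. \<forall>y\<in>A i. x + y > a + b \<longrightarrow> pi_map a b (x + y) \<notin> A i)"

definition WS_plus_b :: "nat \<Rightarrow> nat \<Rightarrow> nat" where
  "WS_plus_b b n = (if \<exists>a A. WS_template b a n A
                    then (GREATEST a. \<exists>A. WS_template b a n A) else 0)"

definition WS_plus :: "nat \<Rightarrow> nat" where
  "WS_plus n = (SUP b\<in>{b. 0 < b}. WS_plus_b b n)"

end

theory Submission
  imports Defs "HOL-Library.Ramsey"
begin

text \<open>
  Upper bound: a template with width a is in particular a partition of {1..a+b} into n weakly
  sum-free sets, so a < a + b \<le> WS n; that WS n is finite at all is a Schur-type consequence of
  Ramsey's theorem applied to the colouring {x, y} \<mapsto> colour of |x - y|.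

  Lower bound: take p = WS (n - 1) and a partition B 1, ..., B (n-1) of {1..p} into weakly sum-free
  sets. With width a = \<lfloor>3(p+1)/2\<rfloor>, give colour n the middle block {p+1..2p+1} and colour i < n
  the set B i together with those translates a + B i that lie above the middle block. The choice
  3p + 2 \<le> 2a \<le> 3p + 3 is what makes the four template conditions hold, and
  a \<ge> 3p/2 + 1.
\<close>

lemma weakly_sum_free_not_all_differences:
  assumes "weakly_sum_free S" "u < x" "x < y" "y < z"
  shows "\<not> {x - u, y - x, z - y, y - u, z - x, z - u} \<subseteq> S"
proof
  assume diffs: "{x - u, y - x, z - y, y - u, z - x, z - u} \<subseteq> S"
  have no_sum: "c + d \<notin> S" if "c \<in> S" "d \<in> S" "c \<noteq> d" for c d
    using assms(1) that unfolding weakly_sum_free_def by blast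
  have "x - u \<noteq> y - x \<or> y - x \<noteq> z - y \<or> x - u \<noteq> z - x"
    using assms(2-4) by auto
  then show False
  proof (elim disjE)
    assume "x - u \<noteq> y - x"
    then show False using no_sum[of "x - u" "y - x"] diffs assms(2-4) by auto
  next
    assume "y - x \<noteq> z - y"
    then show False using no_sum[of "y - x" "z - y"] diffs assms(2-4) by auto
  next
    assume "x - u \<noteq> z - x"
    then show False using no_sum[of "x - u" "z - x"] diffs assms(2-4) by auto
  qed
qed

lemma cover_colouring:
  assumes "{1..p} \<subseteq> (\<Union>i\<in>{1..n}. A i)"
  obtains col where "\<And>d. d \<in> {1..p} \<Longrightarrow> col d < n \<and> d \<in> A (Suc (col d))"
proof -
  have "\<forall>d\<in>{1..p}. \<exists>i. i < n \<and> d \<in> A (Suc i)"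
  proof
    fix d assume "d \<in> {1..p}"
    then obtain j where "j \<in> {1..n}" "d \<in> A j" using assms by blast
    then show "\<exists>i. i < n \<and> d \<in> A (Suc i)" by (intro exI[of _ "j - 1"]) auto
  qed
  then show ?thesis using that by (metis bchoice)
qed

lemma weakly_sum_free_cover_bounded:
  fixes n :: nat
  shows "\<exists>N::nat. \<forall>p A. {1..p} \<subseteq> (\<Union>i\<in>{1..n}. A i) \<and> (\<forall>i\<in>{1..n}. weakly_sum_free (A i)) \<longrightarrow> p < N"
proof -
  obtain N :: nat where N: "partn_lst {..<N} (replicate n 4) 2"
    using ramsey_full by blast
  have "p < N" if cover: "{1..p} \<subseteq> (\<Union>i\<in>{1..n}. A i)"
    and wsf: "\<forall>i\<in>{1..n}. weakly_sum_free (A i)" for p A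
  proof (rule ccontr)
    assume "\<not> p < N"
    obtain col where col: "\<And>d. d \<in> {1..p} \<Longrightarrow> col d < n \<and> d \<in> A (Suc (col d))"
      using cover_colouring[OF cover] by blast
    define f where "f e = col (Max e - Min e)" for e :: "nat set"
    have f_pair: "f {x, y} = col (y - x)" if "x < y" for x y
      using that unfolding f_def by (simp add: max_def min_def)
    have diff_range: "y - x \<in> {1..p}" if "x < y" "y < N" for x y
      using that \<open>\<not> p < N\<close> by auto
    have "f \<in> nsets {..<N} 2 \<rightarrow> {..<n}"
    proof
      fix e assume "e \<in> nsets {..<N} 2"
      then obtain x y where "e = {x, y}" "x < y" "y < N"
        by (auto simp: ordered_nsets_2_eq)
      then show "f e \<in> {..<n}"
        using col[OF diff_range] f_pair by auto
    qed
    then obtain i H where "i < n" and H: "H \<in> nsets {..<N} 4" and mono: "f ` nsets H 2 \<subseteq> {i}"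
      using partn_lstE[OF N, of f n] by auto
    obtain u x y z where uxyz: "H = {u, x, y, z}" "u < x" "x < y" "y < z" "z < N"
      using H ordered_nsets_4_eq[of "{..<N}"] by auto
    have "d' - d \<in> A (Suc i)" if "d \<in> H" "d' \<in> H" "d < d'" for d d'
    proof -
      have "{d, d'} \<in> nsets H 2"
        using that by simp
      then have "f {d, d'} \<in> {i}"
        by (rule subsetD[OF mono imageI])
      then have "col (d' - d) = i"
        using f_pair[OF \<open>d < d'\<close>] by simp
      then show ?thesis
        using col[OF diff_range[of d d']] that uxyz by auto
    qed
    then have "{x - u, y - x, z - y, y - u, z - x, z - u} \<subseteq> A (Suc i)"
      using uxyz by auto
    moreover have "weakly_sum_free (A (Suc i))"
      using wsf \<open>i < n\<close> by auto
    ultimately show False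
      using weakly_sum_free_not_all_differences uxyz by blast
  qed
  then show ?thesis by blast
qed

definition WS_partitionable :: "nat \<Rightarrow> nat \<Rightarrow> bool" where
  "WS_partitionable n p \<longleftrightarrow> (\<exists>A. is_partition A n {1..p} \<and> (\<forall>i\<in>{1..n}. weakly_sum_free (A i)))"

lemma WS_partitionable_bounded: "\<exists>N. \<forall>p. WS_partitionable n p \<longrightarrow> p < N"
proof -
  obtain N where N: "\<And>p A. {1..p} \<subseteq> (\<Union>i\<in>{1..n}. A i) \<Longrightarrow> \<forall>i\<in>{1..n}. weakly_sum_free (A i) \<Longrightarrow> p < N"
    using weakly_sum_free_cover_bounded[of n] by blast
  have "p < N" if partitionable: "WS_partitionable n p" for p
  proof -
    obtain A where "is_partition A n {1..p}" "\<forall>i\<in>{1..n}. weakly_sum_free (A i)"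
      using partitionable unfolding WS_partitionable_def by blast
    then show "p < N"
      by (intro N) (auto simp: is_partition_def)
  qed
  then show ?thesis by blast
qed

lemma WS_partitionable_WS: "WS_partitionable n (WS n)"
  and le_WS: "WS_partitionable n p \<Longrightarrow> p \<le> WS n"
proof -
  obtain N where N: "\<And>p. WS_partitionable n p \<Longrightarrow> p < N"
    using WS_partitionable_bounded by blast
  have WS_eq: "WS n = Greatest (WS_partitionable n)"
    unfolding WS_def WS_partitionable_def by simp
  have "WS_partitionable n 0"
    unfolding WS_partitionable_def is_partition_def weakly_sum_free_def by (intro exI[of _ "\<lambda>_. {}"]) auto
  then show "WS_partitionable n (WS n)"
    unfolding WS_eq using N by (metis GreatestI_nat less_imp_le)
  show "WS_partitionable n p \<Longrightarrow> p \<le> WS n"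
    unfolding WS_eq using N by (metis Greatest_le_nat less_imp_le)
qed

lemma WS_pos:
  assumes "1 \<le> n"
  shows "1 \<le> WS n"
proof (rule le_WS)
  show "WS_partitionable n 1"
    using assms unfolding WS_partitionable_def is_partition_def weakly_sum_free_def
    by (intro exI[of _ "\<lambda>i. if i = 1 then {1} else {}"]) auto
qed

lemma WS_template_le_WS: "WS_template b a n A \<Longrightarrow> a + b \<le> WS n"
  by (rule le_WS) (auto simp: WS_partitionable_def WS_template_def)

lemma WS_plus_b_le_WS: "WS_plus_b b n \<le> WS n"
proof (cases "\<exists>a A. WS_template b a n A")
  case True
  have bounded: "a \<le> WS n" if "\<exists>A. WS_template b a n A" for a
    using that WS_template_le_WS by (meson add_leD1)
  have "\<exists>A. WS_template b (GREATEST a. \<exists>A. WS_template b a n A) n A"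
    by (rule GreatestI_ex_nat[where b = "WS n"]) (use True bounded in auto)
  then have "(GREATEST a. \<exists>A. WS_template b a n A) \<le> WS n"
    by (rule bounded)
  then show ?thesis
    using True unfolding WS_plus_b_def by simp
next
  case False
  then show ?thesis unfolding WS_plus_b_def by auto
qed

lemma WS_template_le_WS_plus_b:
  assumes template: "WS_template b a n A"
  shows "a \<le> WS_plus_b b n"
proof -
  have "a \<le> (GREATEST a. \<exists>A. WS_template b a n A)"
    using template WS_template_le_WS by (intro Greatest_le_nat[of _ a "WS n"]) (blast, meson add_leD1)
  then show ?thesis
    using template unfolding WS_plus_b_def by auto
qed

lemma WS_plus_le_WS: "WS_plus n \<le> WS n"
  unfolding WS_plus_def by (rule cSUP_least) (auto simp: WS_plus_b_le_WS)

lemma WS_plus_b_le_WS_plus: "0 < b \<Longrightarrow> WS_plus_b b n \<le> WS_plus n"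
  unfolding WS_plus_def
  by (rule cSUP_upper) (auto intro!: bdd_aboveI2[where M = "WS n"] WS_plus_b_le_WS)

lemma pi_map_add_mult:
  assumes "b < t" "t \<le> 2 * b" "b < a"
  shows "pi_map a b (t + k * a) = t"
proof (cases "t < a")
  case True
  then show ?thesis using assms unfolding pi_map_def by simp
next
  case False
  then have "(t + k * a) mod a = t - a"
    using assms by (simp add: le_mod_geq)
  then show ?thesis using assms False unfolding pi_map_def by simp
qed

locale WS_partition_extension =
  fixes B :: "nat \<Rightarrow> nat set" and n p :: nat
  assumes two_le_n: "2 \<le> n"
    and B_partition: "is_partition B (n - 1) {1..p}"
    and B_weakly_sum_free: "\<forall>i\<in>{1..n - 1}. weakly_sum_free (B i)"
    and p_pos: "0 < p"
begin

definition width :: nat where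
  "width = 3 * (p + 1) div 2"

text \<open>Since B i \<subseteq> {1..p}, the condition x - width \<in> B i forces width < x despite the truncated
  subtraction; the cut at 2p + 2 drops the translates that would fall into the middle block.\<close>
definition colour :: "nat \<Rightarrow> nat set" where
  "colour i = (if i = n then {p + 1..2 * p + 1} else B i \<union> {x. 2 * p + 2 \<le> x \<and> x - width \<in> B i})"

lemma width_bounds: "3 * p + 2 \<le> 2 * width" "2 * width \<le> 3 * p + 3" "p < width" "width \<le> 2 * p + 1"
  using p_pos unfolding width_def by auto

lemma B_subset: "i \<in> {1..n - 1} \<Longrightarrow> x \<in> B i \<Longrightarrow> 1 \<le> x \<and> x \<le> p"
  using B_partition unfolding is_partition_def by auto

lemma B_unique: "i \<in> {1..n - 1} \<Longrightarrow> j \<in> {1..n - 1} \<Longrightarrow> x \<in> B i \<Longrightarrow> x \<in> B j \<Longrightarrow> i = j"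
  using B_partition unfolding is_partition_def by blast

lemma B_cover: "1 \<le> x \<Longrightarrow> x \<le> p \<Longrightarrow> \<exists>i\<in>{1..n - 1}. x \<in> B i"
  using B_partition unfolding is_partition_def by auto

lemma colour_last: "colour n = {p + 1..2 * p + 1}"
  unfolding colour_def by simp

lemma mem_colour: "i \<noteq> n \<Longrightarrow> x \<in> colour i \<longleftrightarrow> x \<in> B i \<or> (2 * p + 2 \<le> x \<and> x - width \<in> B i)"
  unfolding colour_def by simp

lemma not_mem_colour_middle: "i \<in> {1..n - 1} \<Longrightarrow> p < x \<Longrightarrow> x < 2 * p + 2 \<Longrightarrow> x \<notin> colour i"
  using mem_colour[of i x] B_subset[of i x] two_le_n by auto

lemma colour_decompose:
  assumes "i \<in> {1..n - 1}" "x \<in> colour i"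
  obtains x' e where "x' \<in> B i" "x = x' + e * width" "e \<le> 1" "e = 1 \<Longrightarrow> 2 * p + 2 \<le> x"
proof (cases "x \<in> B i")
  case True
  then show ?thesis using that[of x 0] by simp
next
  case False
  then have "2 * p + 2 \<le> x" "x - width \<in> B i"
    using assms mem_colour[of i x] by auto
  then show ?thesis using that[of "x - width" 1] width_bounds by simp
qed

lemma colour_subset: "i \<in> {1..n} \<Longrightarrow> colour i \<subseteq> {1..width + p}"
proof
  fix x assume i: "i \<in> {1..n}" and x: "x \<in> colour i"
  show "x \<in> {1..width + p}"
  proof (cases "i = n")
    case True
    then show ?thesis using x width_bounds colour_last by auto
  next
    case False
    then have i': "i \<in> {1..n - 1}" using i by auto
    obtain x' e where x': "x' \<in> B i" "x = x' + e * width" "e \<le> 1"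
      using colour_decompose[OF i' x] by blast
    then show ?thesis
      using B_subset[OF i' x'(1)] width_bounds by (cases e) auto
  qed
qed

lemma colour_cover: "x \<in> {1..width + p} \<Longrightarrow> \<exists>i\<in>{1..n}. x \<in> colour i"
proof -
  assume x: "x \<in> {1..width + p}"
  consider "x \<le> p" | "p < x" "x \<le> 2 * p + 1" | "2 * p + 1 < x"
    by linarith
  then show ?thesis
  proof cases
    case 1
    then obtain i where "i \<in> {1..n - 1}" "x \<in> B i" using B_cover[of x] x by auto
    then show ?thesis using mem_colour[of i x] by (intro bexI[of _ i]) auto
  next
    case 2
    then show ?thesis using colour_last two_le_n by (intro bexI[of _ n]) auto
  next
    case 3
    then have "1 \<le> x - width" "x - width \<le> p"
      using x width_bounds by auto
    then obtain i where "i \<in> {1..n - 1}" "x - width \<in> B i"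
      using B_cover[of "x - width"] by auto
    then show ?thesis using 3 mem_colour[of i x] by (intro bexI[of _ i]) auto
  qed
qed

lemma colour_disjoint:
  assumes "i \<in> {1..n}" "j \<in> {1..n}" "x \<in> colour i" "x \<in> colour j"
  shows "i = j"
proof (cases "i = n \<or> j = n")
  case True
  have "x \<notin> colour k" if "k \<in> {1..n}" "k \<noteq> n" "x \<in> colour n" for k
  proof -
    have "k \<in> {1..n - 1}" using that(1,2) by auto
    then show ?thesis using that(3) not_mem_colour_middle[of k x] colour_last by auto
  qed
  then show ?thesis
    using True assms by metis
next
  case False
  then have i: "i \<in> {1..n - 1}" and j: "j \<in> {1..n - 1}" using assms(1,2) by auto
  obtain x' e where x': "x' \<in> B i" "x = x' + e * width" "e \<le> 1" "e = 1 \<Longrightarrow> 2 * p + 2 \<le> x"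
    using colour_decompose[OF i assms(3)] by blast
  obtain x'' f where x'': "x'' \<in> B j" "x = x'' + f * width" "f \<le> 1" "f = 1 \<Longrightarrow> 2 * p + 2 \<le> x"
    using colour_decompose[OF j assms(4)] by blast
  have "x' = x''"
    using x' x'' B_subset[OF i x'(1)] B_subset[OF j x''(1)] width_bounds
    by (cases e; cases f) auto
  then show ?thesis using B_unique[OF i j] x'(1) x''(1) by simp
qed

lemma colour_partition: "is_partition colour n {1..width + p}"
  unfolding is_partition_def
proof (intro conjI ballI impI)
  show "(\<Union>i\<in>{1..n}. colour i) = {1..width + p}"
  proof
    show "(\<Union>i\<in>{1..n}. colour i) \<subseteq> {1..width + p}"
      using colour_subset by (rule UN_least)
    show "{1..width + p} \<subseteq> (\<Union>i\<in>{1..n}. colour i)"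
      using colour_cover by blast
  qed
  show "colour i \<inter> colour j = {}" if "i \<in> {1..n}" "j \<in> {1..n}" "i \<noteq> j" for i j
    using that colour_disjoint by blast
qed

lemma colour_weakly_sum_free:
  assumes i: "i \<in> {1..n}"
  shows "weakly_sum_free (colour i)"
proof (cases "i = n")
  case True
  show ?thesis unfolding True colour_last weakly_sum_free_def by simp
next
  case False
  then have i': "i \<in> {1..n - 1}" using i by auto
  show ?thesis unfolding weakly_sum_free_def
  proof (intro ballI impI notI)
    fix x y assume x: "x \<in> colour i" and y: "y \<in> colour i" and "x \<noteq> y" and xy: "x + y \<in> colour i"
    obtain x' e where x': "x' \<in> B i" "x = x' + e * width" "e \<le> 1" "e = 1 \<Longrightarrow> 2 * p + 2 \<le> x"
      using colour_decompose[OF i' x] by blast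
    obtain y' f where y': "y' \<in> B i" "y = y' + f * width" "f \<le> 1" "f = 1 \<Longrightarrow> 2 * p + 2 \<le> y"
      using colour_decompose[OF i' y] by blast
    obtain s' g where s': "s' \<in> B i" "x + y = s' + g * width" "g \<le> 1"
      "g = 1 \<Longrightarrow> 2 * p + 2 \<le> x + y"
      using colour_decompose[OF i' xy] by blast
    have e: "e = 0 \<or> e = 1" and f: "f = 0 \<or> f = 1" and g: "g = 0 \<or> g = 1"
      using x'(3) y'(3) s'(3) by auto
    have "x' + y' = s' \<and> x' \<noteq> y'"
      using e f g x'(2,4) y'(2,4) s'(2,4) \<open>x \<noteq> y\<close> width_bounds
        B_subset[OF i' x'(1)] B_subset[OF i' y'(1)] B_subset[OF i' s'(1)]
      by (elim disjE) auto
    then show False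
      using B_weakly_sum_free i' x'(1) y'(1) s'(1) unfolding weakly_sum_free_def by blast
  qed
qed

lemma colour_sum_free_above:
  assumes i: "i \<in> {1..n}"
  shows "sum_free (colour i - {1..p})"
proof (cases "i = n")
  case True
  show ?thesis unfolding True colour_last sum_free_def by simp
next
  case False
  then have i': "i \<in> {1..n - 1}" using i by auto
  have large: "2 * p + 2 \<le> x" if "x \<in> colour i - {1..p}" for x
    using that mem_colour[OF False, of x] B_subset[OF i', of x] by auto
  have "x + y \<notin> colour i" if "x \<in> colour i - {1..p}" "y \<in> colour i - {1..p}" for x y
    using large[OF that(1)] large[OF that(2)] colour_subset[OF i] width_bounds by auto
  then show ?thesis unfolding sum_free_def by blast
qed

lemma colour_last_wraparound: "x \<in> colour n \<Longrightarrow> y \<in> colour n \<Longrightarrow> x + y - 2 * width \<notin> colour n"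
  using width_bounds unfolding colour_last by auto

lemma pi_map_sum_not_mem_colour:
  assumes i: "i \<in> {1..n - 1}" and x: "x \<in> colour i" and y: "y \<in> colour i"
    and above: "width + p < x + y"
  shows "pi_map width p (x + y) \<notin> colour i"
proof -
  obtain x' e where x': "x' \<in> B i" "x = x' + e * width" "e \<le> 1" "e = 1 \<Longrightarrow> 2 * p + 2 \<le> x"
    using colour_decompose[OF i x] by blast
  obtain y' f where y': "y' \<in> B i" "y = y' + f * width" "f \<le> 1" "f = 1 \<Longrightarrow> 2 * p + 2 \<le> y"
    using colour_decompose[OF i y] by blast
  have "x + y = (x' + y') + (e + f) * width"
    using x' y' by (simp add: algebra_simps)
  moreover have "p < x' + y'" "x' + y' \<le> 2 * p"
    using x' y' above width_bounds B_subset[OF i x'(1)] B_subset[OF i y'(1)]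
    by (cases e; cases f; auto)+
  ultimately have "pi_map width p (x + y) = x' + y'"
    using pi_map_add_mult width_bounds by simp
  then show ?thesis
    using not_mem_colour_middle[OF i] \<open>x' + y' \<le> 2 * p\<close> \<open>p < x' + y'\<close> by simp
qed

lemma WS_template: "WS_template p width n colour"
  unfolding WS_template_def
  using p_pos width_bounds two_le_n colour_partition colour_weakly_sum_free colour_sum_free_above
    colour_last_wraparound pi_map_sum_not_mem_colour by auto

lemma three_halves_le_width: "3 / 2 * real p + 1 \<le> real width"
  using width_bounds(1) by linarith

end

theorem proposition3p16:
  fixes n :: nat
  assumes "n \<ge> 2"
  shows "3 / 2 * real (WS (n - 1)) + 1 \<le> real (WS_plus n)
         \<and> WS_plus n \<le> WS n"
proof
  show "WS_plus n \<le> WS n"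
    by (rule WS_plus_le_WS)
  define p where "p = WS (n - 1)"
  obtain B where "is_partition B (n - 1) {1..p}" "\<forall>i\<in>{1..n - 1}. weakly_sum_free (B i)"
    using WS_partitionable_WS[of "n - 1"] unfolding p_def WS_partitionable_def by blast
  moreover have "0 < p"
    using WS_pos[of "n - 1"] assms unfolding p_def by (simp add: Suc_le_eq)
  ultimately interpret WS_partition_extension B n p
    using assms by (simp add: WS_partition_extension_def)
  have "width \<le> WS_plus n"
    using WS_template_le_WS_plus_b[OF WS_template] WS_plus_b_le_WS_plus[OF p_pos] by (rule order_trans)
  then show "3 / 2 * real (WS (n - 1)) + 1 \<le> real (WS_plus n)"
    using three_halves_le_width unfolding p_def by linarith
qed

end
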